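(* Let $0<r<\min(n,m)$ and $Z=UGV^T\in\mathcal{M}_r(\mathbb{R}^{n\times m})$. Define on $\mathcal{U}_Z$ the operation $$\theta_Z^{-1}(X,Y,H)\ \star_Z\ \theta_Z^{-1}(X',Y',H'):=\theta_Z^{-1}(X+X',Y+Y',HH').$$ Then $(\mathcal{U}_Z,\star_Z)$ is a Lie group (with the analytic structure given by the chart $\theta_Z$) with identity element $UV^T$, and the map $\eta_Z:\mathcal{U}_Z\to\mathcal{G}_U\times\mathcal{G}_V\times\mathrm{GL}_r$, $\eta_Z(\theta_Z^{-1}(X,Y,H))=(\exp(U_\perp XU^+),\exp(V_\perp YV^+),H)$, is a Lie group isomorphism, where the target carries the product group structure.
   Context: $\mathcal{M}_r(\mathbb{R}^{a\times b})$: real $a\times b$ matrices of rank exactly $r$; $\mathrm{GL}_r$: invertible $r\times r$ matrices. For $A$ of full column rank, $A^+:=(A^TA)^{-1}A^T$. Here $U\in\mathcal{M}_r(\mathbb{R}^{n\times r})$, $V\in\mathcal{M}_r(\mathbb{R}^{m\times r})$, $G\in\mathrm{GL}_r$, and $U_\perp\in\mathcal{M}_{n-r}(\mathbb{R}^{n\times(n-r)})$, $V_\perp\in\mathcal{M}_{m-r}(\mathbb{R}^{m\times(m-r)})$ are fixed with $U^TU_\perp=0$, $V^TV_\perp=0$. $\mathcal{U}_Z:=\{(U+U_\perp X)H(V+V_\perp Y)^T: X\in\mathbb{R}^{(n-r)\times r},Y\in\mathbb{R}^{(m-r)\times r},H\in\mathrm{GL}_r\}$ and $\theta_Z:\mathcal{U}_Z\to\mathbb{R}^{(n-r)\times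 r}\times\mathbb{R}^{(m-r)\times r}\times\mathrm{GL}_r$ is the bijection with $\theta_Z^{-1}(X,Y,H)=(U+U_\perp X)H(V+V_\perp Y)^T$. For $W\in\mathcal{M}_r(\mathbb{R}^{k\times r})$ with fixed $W_\perp$, $\mathcal{G}_W:=\{\exp(W_\perp XW^+): X\in\mathbb{R}^{(k-r)\times r}\}$, a closed Lie subgroup of $\mathrm{GL}_k$ under matrix multiplication; $\exp$ is the matrix exponential. *)

theory Defs
  imports "HOL-Analysis.Analysis" "HOL-Algebra.Group"
begin

text \<open>Moore-Penrose type left inverse for full column rank: A^+ = (A^T A)^{-1} A^T.\<close>
definition pinv :: "real^'r^'n \<Rightarrow> real^'n^'r" where
  "pinv A = matrix_inv (transpose A ** A) ** transpose A"

text \<open>Matrix powers and the matrix exponential (the product on real^'n^'n as a type is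
componentwise, so the exponential must be defined via the matrix product).\<close>
fun mpow :: "real^'n^'n \<Rightarrow> nat \<Rightarrow> real^'n^'n" where
  "mpow A 0 = mat 1"
| "mpow A (Suc k) = A ** mpow A k"

definition mexp :: "real^'n^'n \<Rightarrow> real^'n^'n" where
  "mexp A = (\<Sum>k. (1 / fact k) *\<^sub>R mpow A k)"

definition GL :: "(real^'r^'r) set" where
  "GL = {H. invertible H}"

definition mat_grp :: "(real^'n^'n) set \<Rightarrow> (real^'n^'n) monoid" where
  "mat_grp S = \<lparr>carrier = S, mult = (\<lambda>A B. A ** B), one = mat 1\<rparr>"

definition GW :: "real^'r^'k \<Rightarrow> real^'p^'k \<Rightarrow> (real^'k^'k) set" where
  "GW W Wperp = range (\<lambda>X::real^'r^'p. mexp (Wperp ** X ** pinv W))"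

fun iter_dderiv :: "'a::real_normed_vector list \<Rightarrow> ('a \<Rightarrow> 'b::real_normed_vector) \<Rightarrow> 'a \<Rightarrow> 'b" where
  "iter_dderiv [] f = f"
| "iter_dderiv (v # vs) f = (\<lambda>x. frechet_derivative (iter_dderiv vs f) (at x) v)"

definition smooth_on :: "'a::euclidean_space set \<Rightarrow> ('a \<Rightarrow> 'b::euclidean_space) \<Rightarrow> bool" where
  "smooth_on S f \<longleftrightarrow> (\<forall>vs. \<forall>x\<in>S. iter_dderiv vs f differentiable (at x))"

definition real_analytic_on :: "'a::euclidean_space set \<Rightarrow> ('a \<Rightarrow> 'b::euclidean_space) \<Rightarrow> bool" where
  "real_analytic_on S f \<longleftrightarrow> open S \<and> smooth_on S f \<and>
     (\<forall>x\<in>S. \<exists>e>0. ball x e \<subseteq> S \<and>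
        (\<forall>h. norm h < e \<longrightarrow>
           (\<lambda>j. (1 / fact j) *\<^sub>R iter_dderiv (replicate j h) f x) sums f (x + h)))"

definition lie_group_chart ::
  "'g set \<Rightarrow> ('g \<Rightarrow> 'g \<Rightarrow> 'g) \<Rightarrow> 'g \<Rightarrow> ('g \<Rightarrow> 'e::euclidean_space) \<Rightarrow> 'e set \<Rightarrow> bool" where
  "lie_group_chart S m e \<phi> D \<longleftrightarrow>
     open D \<and> bij_betw \<phi> S D \<and>
     group \<lparr>carrier = S, mult = m, one = e\<rparr> \<and>
     real_analytic_on (D \<times> D)
       (\<lambda>z. \<phi> (m (inv_into S \<phi> (fst z)) (inv_into S \<phi> (snd z)))) \<and>
     real_analytic_on D
       (\<lambda>a. \<phi> (m_inv \<lparr>carrier = S, mult = m, one = e\<rparr> (inv_into S \<phi> a)))"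

definition analytic_on_subset :: "'a::euclidean_space set \<Rightarrow> ('a \<Rightarrow> 'b::euclidean_space) \<Rightarrow> bool" where
  "analytic_on_subset T f \<longleftrightarrow>
     (\<forall>y\<in>T. \<exists>W g. open W \<and> y \<in> W \<and> real_analytic_on W g \<and> (\<forall>z\<in>W \<inter> T. g z = f z))"

definition thetainv ::
  "real^'r^'n \<Rightarrow> real^'p^'n \<Rightarrow> real^'r^'m \<Rightarrow> real^'q^'m \<Rightarrow>
   (real^'r^'p) \<times> (real^'r^'q) \<times> (real^'r^'r) \<Rightarrow> real^'m^'n" where
  "thetainv U Uperp V Vperp XYH =
     (case XYH of (X, Y, H) \<Rightarrow> (U + Uperp ** X) ** H ** transpose (V + Vperp ** Y))"

definition param_dom :: "((real^'r^'p) \<times> (real^'r^'q) \<times> (real^'r^'r)) set" where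
  "param_dom = UNIV \<times> UNIV \<times> GL"

definition UZ :: "real^'r^'n \<Rightarrow> real^'p^'n \<Rightarrow> real^'r^'m \<Rightarrow> real^'q^'m \<Rightarrow> (real^'m^'n) set" where
  "UZ U Uperp V Vperp = thetainv U Uperp V Vperp ` param_dom"

definition thetaZ ::
  "real^'r^'n \<Rightarrow> real^'p^'n \<Rightarrow> real^'r^'m \<Rightarrow> real^'q^'m \<Rightarrow>
   real^'m^'n \<Rightarrow> (real^'r^'p) \<times> (real^'r^'q) \<times> (real^'r^'r)" where
  "thetaZ U Uperp V Vperp = inv_into param_dom (thetainv U Uperp V Vperp)"

definition starZ ::
  "real^'r^'n \<Rightarrow> real^'p^'n \<Rightarrow> real^'r^'m \<Rightarrow> real^'q^'m \<Rightarrow>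
   real^'m^'n \<Rightarrow> real^'m^'n \<Rightarrow> real^'m^'n" where
  "starZ U Uperp V Vperp A B =
     (case (thetaZ U Uperp V Vperp A, thetaZ U Uperp V Vperp B) of
        ((X, Y, H), (X', Y', H')) \<Rightarrow> thetainv U Uperp V Vperp (X + X', Y + Y', H ** H'))"

definition etaZ ::
  "real^'r^'n \<Rightarrow> real^'p^'n \<Rightarrow> real^'r^'m \<Rightarrow> real^'q^'m \<Rightarrow>
   real^'m^'n \<Rightarrow> (real^'n^'n) \<times> (real^'m^'m) \<times> (real^'r^'r)" where
  "etaZ U Uperp V Vperp A =
     (case thetaZ U Uperp V Vperp A of (X, Y, H) \<Rightarrow>
        (mexp (Uperp ** X ** pinv U), mexp (Vperp ** Y ** pinv V), H))"

end

theory Submission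
  imports Defs
begin

(* The chart theta_Z identifies U_Z with the open set
   R^((n-r) x r) x R^((m-r) x r) x GL_r, and star_Z is by definition the transport of the
   product of two additive groups with GL_r. Hence the group axioms are immediate, and in the
   chart multiplication and inversion are (X,Y,H),(X',Y',H') |-> (X+X', Y+Y', H H') and
   (X,Y,H) |-> (-X, -Y, H^-1): polynomial, resp. analytic by the Neumann series
   (H + K)^-1 = sum_j (-H^-1 K)^j H^-1.
   Since U^T U_perp = 0 we have U^+ U_perp = 0, so N = U_perp X U^+ satisfies N N = 0 and
   exp N = I + N. Thus X |-> exp(U_perp X U^+) is an additive-to-multiplicative homomorphism
   onto G_U, inverted by M |-> U_perp^+ M U, which makes eta_Z an isomorphism whose
   coordinate expressions in both directions are affine. *)

lemma norm_vec_power2: "norm (x::'a::real_normed_vector^'n) ^ 2 = (\<Sum>i\<in>UNIV. norm (x$i) ^ 2)"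
  unfolding norm_vec_def L2_set_def by (simp add: sum_nonneg)

lemma norm_matrix_vector_mult_le: "norm ((A::real^'n^'m) *v x) \<le> norm A * norm x"
proof -
  have "norm (A *v x) ^ 2 = (\<Sum>i\<in>UNIV. ((A$i) \<bullet> x) ^ 2)"
    by (simp add: norm_vec_power2 matrix_mult_dot)
  also have "\<dots> \<le> (\<Sum>i\<in>UNIV. norm (A$i) ^ 2 * norm x ^ 2)"
  proof (rule sum_mono)
    fix i
    have "\<bar>(A$i) \<bullet> x\<bar> ^ 2 \<le> (norm (A$i) * norm x) ^ 2"
      by (rule power_mono[OF Cauchy_Schwarz_ineq2]) simp
    then show "((A$i) \<bullet> x) ^ 2 \<le> norm (A$i) ^ 2 * norm x ^ 2"
      by (simp add: power_mult_distrib)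
  qed
  also have "\<dots> = (norm A * norm x) ^ 2"
    by (simp add: norm_vec_power2[of A] sum_distrib_right power_mult_distrib)
  finally show ?thesis
    by (rule power2_le_imp_le) simp
qed

lemma row_matrix_mult: "((A::real^'n^'m) ** (B::real^'k^'n)) $ i = transpose B *v (A $ i)"
  unfolding matrix_matrix_mult_def matrix_vector_mult_def transpose_def vec_eq_iff
  by (auto intro!: sum.cong)

lemma norm_transpose: "norm (transpose (A::real^'n^'m)) = norm A"
proof -
  have "norm (transpose A) ^ 2 = (\<Sum>j\<in>UNIV. \<Sum>i\<in>UNIV. (A$i$j) ^ 2)"
    unfolding norm_vec_power2 by (simp add: transpose_def)
  also have "\<dots> = (\<Sum>i\<in>UNIV. \<Sum>j\<in>UNIV. (A$i$j) ^ 2)"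
    by (rule sum.swap)
  also have "\<dots> = norm A ^ 2"
    unfolding norm_vec_power2[of A] by (simp add: norm_vec_power2)
  finally show ?thesis
    by (simp add: power2_eq_iff_nonneg)
qed

lemma norm_matrix_mult_le: "norm ((A::real^'n^'m) ** B) \<le> norm A * norm B"
proof -
  have "norm (A ** B) ^ 2 = (\<Sum>i\<in>UNIV. norm (transpose B *v (A$i)) ^ 2)"
    by (simp add: norm_vec_power2 row_matrix_mult)
  also have "\<dots> \<le> (\<Sum>i\<in>UNIV. (norm B * norm (A$i)) ^ 2)"
    using norm_matrix_vector_mult_le[of "transpose B"]
    by (intro sum_mono power_mono) (auto simp: norm_transpose)
  also have "\<dots> = (norm A * norm B) ^ 2"
    by (simp add: norm_vec_power2[of A] sum_distrib_left power_mult_distrib mult.commute)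
  finally show ?thesis
    by (rule power2_le_imp_le) simp
qed

lemma matrix_add_rdistrib: "(B + C) ** A = B ** A + C ** A"
  by (vector matrix_matrix_mult_def sum.distrib[symmetric] field_simps)

lemma bounded_bilinear_matrix_mult:
  "bounded_bilinear ((**) :: real^'n^'m \<Rightarrow> real^'k^'n \<Rightarrow> real^'k^'m)"
proof
  fix a a' :: "real^'n^'m" and b b' :: "real^'k^'n" and r :: real
  show "(a + a') ** b = a ** b + a' ** b" by (rule matrix_add_rdistrib)
  show "a ** (b + b') = a ** b + a ** b'" by (rule matrix_add_ldistrib)
  show "(r *\<^sub>R a) ** b = r *\<^sub>R (a ** b)" by (rule scalar_matrix_assoc[symmetric])
  show "a ** (r *\<^sub>R b) = r *\<^sub>R (a ** b)" by (simp add: matrix_scalar_ac scalar_matrix_assoc)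
  show "\<exists>K. \<forall>a b. norm ((a::real^'n^'m) ** (b::real^'k^'n)) \<le> norm a * norm b * K"
    by (rule exI[of _ 1]) (simp add: norm_matrix_mult_le)
qed

lemmas matrix_mult_simps =
  bounded_bilinear.diff_left[OF bounded_bilinear_matrix_mult]
  bounded_bilinear.diff_right[OF bounded_bilinear_matrix_mult]
  bounded_bilinear.minus_left[OF bounded_bilinear_matrix_mult]
  bounded_bilinear.minus_right[OF bounded_bilinear_matrix_mult]
  bounded_bilinear.add_left[OF bounded_bilinear_matrix_mult]
  bounded_bilinear.add_right[OF bounded_bilinear_matrix_mult]

lemmas bounded_linear_matrix_mult_left_comp =
  bounded_bilinear.bounded_linear_right[OF bounded_bilinear_matrix_mult, THEN bounded_linear_compose]

lemmas bounded_linear_matrix_mult_right_comp =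
  bounded_bilinear.bounded_linear_left[OF bounded_bilinear_matrix_mult, THEN bounded_linear_compose]

section \<open>The matrix inverse\<close>

lemma
  assumes "invertible (A::real^'n^'n)"
  shows matrix_inv_right: "A ** matrix_inv A = mat 1"
    and matrix_inv_left: "matrix_inv A ** A = mat 1"
  using someI_ex[OF assms[unfolded invertible_def]] by (simp_all add: matrix_inv_def)

lemma invertible_matrix_inv: "invertible (A::real^'n^'n) \<Longrightarrow> invertible (matrix_inv A)"
  using matrix_inv_left invertible_right_inverse by blast

lemma invertible_add_small:
  fixes H K :: "real^'n^'n"
  assumes H: "invertible H" and small: "norm K * norm (matrix_inv H) < 1"
  shows "invertible (H + K)"
proof -
  define M where "M = matrix_inv H ** K"
  have M: "norm M < 1"
    using norm_matrix_mult_le[of "matrix_inv H" K] small by (simp add: M_def mult.commute)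
  have "x = 0" if "(mat 1 + M) *v x = 0" for x
  proof -
    have "x = - (M *v x)"
      using that by (simp add: matrix_vector_mult_add_rdistrib eq_neg_iff_add_eq_0)
    then have "norm x \<le> norm M * norm x"
      using norm_matrix_vector_mult_le[of M x] by (metis norm_minus_cancel)
    with M show "x = 0"
      by (metis mult_le_cancel_right1 norm_eq_zero norm_ge_zero not_le order_le_less)
  qed
  then have "invertible (mat 1 + M)"
    using matrix_left_invertible_ker invertible_left_inverse by blast
  moreover have "H + K = H ** (mat 1 + M)"
    by (simp add: M_def matrix_add_ldistrib matrix_mul_assoc matrix_inv_right[OF H])
  ultimately show ?thesis
    using invertible_mult[OF H] by simp
qed

lemma open_invertible: "open {H::real^'n^'n. invertible H}"
proof (rule openI)
  fix H :: "real^'n^'n"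
  assume "H \<in> {H. invertible H}"
  then have H: "invertible H" by simp
  define e where "e = 1 / (norm (matrix_inv H) + 1)"
  have pos: "norm (matrix_inv H) + 1 > 0"
    using norm_ge_zero[of "matrix_inv H"] by linarith
  then have "e > 0"
    by (simp add: e_def)
  moreover have "ball H e \<subseteq> {H. invertible H}"
  proof
    fix y
    assume "y \<in> ball H e"
    then have "norm (y - H) * norm (matrix_inv H) \<le> e * norm (matrix_inv H)"
      by (simp add: dist_norm norm_minus_commute mult_right_mono)
    also have "\<dots> < 1"
      using pos by (simp add: e_def field_simps)
    finally have "invertible (H + (y - H))"
      by (rule invertible_add_small[OF H])
    then show "y \<in> {H. invertible H}" by simp
  qed
  ultimately show "\<exists>e>0. ball H e \<subseteq> {H. invertible H}" by blast
qed

lemma matrix_inv_add: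
  fixes H K :: "real^'n^'n"
  assumes H: "invertible H" and HK: "invertible (H + K)"
  shows "matrix_inv (H + K) = matrix_inv H - matrix_inv (H + K) ** K ** matrix_inv H"
proof -
  have "matrix_inv (H + K) ** K ** matrix_inv H
      = matrix_inv (H + K) ** (H + K) ** matrix_inv H - matrix_inv (H + K) ** (H ** matrix_inv H)"
    by (simp add: matrix_mult_simps matrix_mul_assoc)
  then show ?thesis
    by (simp add: matrix_inv_left[OF HK] matrix_inv_right[OF H])
qed

lemma norm_matrix_inv_add_le:
  fixes H K :: "real^'n^'n"
  assumes H: "invertible H" and small: "norm K * norm (matrix_inv H) \<le> 1/2"
  shows "norm (matrix_inv (H + K)) \<le> 2 * norm (matrix_inv H)"
proof -
  define G where "G = matrix_inv (H + K)"
  have "invertible (H + K)"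
    using small by (intro invertible_add_small[OF H]) simp
  then have "norm G \<le> norm (matrix_inv H) + norm (G ** K ** matrix_inv H)"
    unfolding G_def by (metis matrix_inv_add[OF H] norm_triangle_ineq4)
  also have "norm (G ** K ** matrix_inv H) \<le> norm G * norm K * norm (matrix_inv H)"
    by (meson norm_matrix_mult_le order_trans mult_right_mono norm_ge_zero)
  also have "\<dots> \<le> norm G * (1/2)"
    using mult_left_mono[OF small norm_ge_zero[of G]] by (simp add: mult.assoc)
  finally show ?thesis
    by (simp add: G_def)
qed

lemma norm_matrix_inv_remainder_le:
  fixes H K :: "real^'n^'n"
  assumes H: "invertible H" and small: "norm K * norm (matrix_inv H) \<le> 1/2"
  shows "norm (matrix_inv (H + K) - matrix_inv H + matrix_inv H ** K ** matrix_inv H)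
    \<le> 2 * norm (matrix_inv H) ^ 3 * norm K ^ 2"
proof -
  define Hi G where "Hi = matrix_inv H" and "G = matrix_inv (H + K)"
  have HK: "invertible (H + K)"
    using small by (intro invertible_add_small[OF H]) simp
  have G: "G = Hi - G ** K ** Hi"
    unfolding Hi_def G_def by (rule matrix_inv_add[OF H HK])
  have "G - Hi + Hi ** K ** Hi = (Hi - G) ** K ** Hi"
    by (subst (1) G) (simp add: matrix_mult_simps)
  also have "\<dots> = G ** K ** Hi ** K ** Hi"
    by (subst (1) G) simp
  finally have "norm (G - Hi + Hi ** K ** Hi) = norm (G ** K ** Hi ** K ** Hi)"
    by simp
  also have "\<dots> \<le> norm G * norm K * norm Hi * norm K * norm Hi"
    by (meson norm_matrix_mult_le order_trans mult_right_mono norm_ge_zero)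
  also have "\<dots> \<le> (2 * norm Hi) * norm K * norm Hi * norm K * norm Hi"
    using norm_matrix_inv_add_le[OF H small] by (intro mult_right_mono) (auto simp: G_def Hi_def)
  finally show ?thesis
    by (simp add: G_def Hi_def power2_eq_square power3_eq_cube mult_ac)
qed

lemma matrix_inv_has_derivative:
  fixes H :: "real^'n^'n"
  assumes H: "invertible H"
  shows "(matrix_inv has_derivative (\<lambda>K. - (matrix_inv H ** K ** matrix_inv H))) (at H)"
proof -
  define Hi where "Hi = matrix_inv H"
  have "((\<lambda>y. norm (y - H) * norm Hi) \<longlongrightarrow> 0) (at H)"
    by (intro tendsto_mult_left_zero tendsto_norm_zero LIM_zero tendsto_ident_at)
  then have "\<forall>\<^sub>F y in at H. norm (y - H) * norm Hi < 1/2"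
    by (rule order_tendstoD(2)) simp
  then have ev: "\<forall>\<^sub>F y in at H.
      norm (norm (matrix_inv y - Hi - - (Hi ** (y - H) ** Hi)) / norm (y - H))
        \<le> 2 * norm Hi ^ 3 * norm (y - H)"
  proof (rule eventually_mono)
    fix y :: "real^'n^'n"
    assume "norm (y - H) * norm Hi < 1/2"
    then have "norm (matrix_inv y - Hi - - (Hi ** (y - H) ** Hi)) \<le> 2 * norm Hi ^ 3 * norm (y - H) ^ 2"
      using norm_matrix_inv_remainder_le[OF H, of "y - H"] by (simp add: Hi_def)
    then show "norm (norm (matrix_inv y - Hi - - (Hi ** (y - H) ** Hi)) / norm (y - H))
        \<le> 2 * norm Hi ^ 3 * norm (y - H)"
      by (cases "y = H") (simp_all add: divide_le_eq power2_eq_square mult.assoc)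
  qed
  moreover have "((\<lambda>y. 2 * norm Hi ^ 3 * norm (y - H)) \<longlongrightarrow> 0) (at H)"
    by (intro tendsto_mult_right_zero tendsto_norm_zero LIM_zero tendsto_ident_at)
  ultimately have "((\<lambda>y. norm (matrix_inv y - Hi - - (Hi ** (y - H) ** Hi)) / norm (y - H)) \<longlongrightarrow> 0) (at H)"
    by (rule Lim_null_comparison)
  moreover have "bounded_linear (\<lambda>K. - (Hi ** K ** Hi))"
    by (intro bounded_linear_minus bounded_linear_matrix_mult_right_comp
        bounded_linear_matrix_mult_left_comp bounded_linear_ident)
  ultimately show ?thesis
    unfolding has_derivative_iff_norm Hi_def[symmetric] by simp
qed

lemma matrix_geometric_sum: "(mat 1 - M) ** (\<Sum>j<N. mpow M j) = mat 1 - mpow (M::real^'n^'n) N"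
  by (induction N) (simp_all add: matrix_add_ldistrib matrix_mult_simps)

lemma norm_mpow_le: "norm (mpow (M::real^'n^'n) N) \<le> norm (mat 1 :: real^'n^'n) * norm M ^ N"
proof (induction N)
  case (Suc N)
  have "norm (mpow M (Suc N)) \<le> norm M * norm (mpow M N)"
    by (simp add: norm_matrix_mult_le)
  also have "\<dots> \<le> norm M * (norm (mat 1 :: real^'n^'n) * norm M ^ N)"
    using Suc.IH by (simp add: mult_left_mono)
  finally show ?case
    by (simp add: mult_ac)
qed simp

lemma mpow_tendsto_zero:
  assumes "norm (M::real^'n^'n) < 1"
  shows "(\<lambda>N. mpow M N) \<longlonglongrightarrow> 0"
proof (rule Lim_null_comparison)
  show "\<forall>\<^sub>F N in sequentially. norm (mpow M N) \<le> norm (mat 1 :: real^'n^'n) * norm M ^ N"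
    by (simp add: norm_mpow_le)
  show "(\<lambda>N. norm (mat 1 :: real^'n^'n) * norm M ^ N) \<longlonglongrightarrow> 0"
    using assms by (intro tendsto_mult_right_zero LIMSEQ_power_zero) simp
qed

lemma matrix_inv_neumann_sums:
  fixes H K :: "real^'n^'n"
  assumes H: "invertible H" and HK: "invertible (H + K)"
    and small: "norm (matrix_inv H ** K) < 1"
  shows "(\<lambda>j. mpow (- (matrix_inv H ** K)) j ** matrix_inv H) sums matrix_inv (H + K)"
proof -
  define Hi Q M where "Hi = matrix_inv H" and "Q = matrix_inv (H + K)" and "M = - (Hi ** K)"
  have HM: "H ** (mat 1 - M) = H + K"
    by (simp add: M_def Hi_def matrix_mult_simps matrix_mul_assoc matrix_inv_right[OF H])
  have partial_sums: "(\<Sum>j<N. mpow M j ** Hi) = Q - Q ** H ** mpow M N ** Hi" for N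
  proof -
    have "(\<Sum>j<N. mpow M j ** Hi) = (\<Sum>j<N. mpow M j) ** Hi"
      by (induction N) (simp_all add: matrix_add_rdistrib)
    also have "\<dots> = Q ** (H + K) ** (\<Sum>j<N. mpow M j) ** Hi"
      by (simp add: Q_def matrix_inv_left[OF HK])
    also have "\<dots> = Q ** (H ** Hi) - Q ** H ** mpow M N ** Hi"
      by (simp add: HM[symmetric] matrix_mul_assoc[symmetric] matrix_geometric_sum)
         (simp add: matrix_mult_simps matrix_mul_assoc)
    finally show ?thesis
      by (simp add: Hi_def matrix_inv_right[OF H])
  qed
  have "(\<lambda>N. Q ** H ** mpow M N ** Hi) \<longlonglongrightarrow> 0"
    using small by (intro bounded_linear.tendsto_zero[OF _ mpow_tendsto_zero]
        bounded_linear_matrix_mult_right_comp bounded_linear_matrix_mult_left_comp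
        bounded_linear_ident) (simp_all add: M_def Hi_def)
  then have "(\<lambda>N. Q - Q ** H ** mpow M N ** Hi) \<longlonglongrightarrow> Q"
    using tendsto_diff[OF tendsto_const] by fastforce
  then show ?thesis
    unfolding sums_def Q_def[symmetric] Hi_def[symmetric] M_def[symmetric] partial_sums .
qed

section \<open>A calculus of real-analytic maps\<close>

text \<open>To prove analyticity we guess the iterated directional derivatives as a family \<open>F\<close>
  indexed by lists of directions and check it against the recursion of \<open>iter_dderiv\<close>.\<close>

lemma iter_dderiv_eq_family:
  assumes S: "open S"
    and F0: "\<And>x. x \<in> S \<Longrightarrow> F [] x = f x"
    and FD: "\<And>vs x. x \<in> S \<Longrightarrow> (F vs has_derivative (\<lambda>v. F (v # vs) x)) (at x)"
  shows "x \<in> S \<Longrightarrow> iter_dderiv vs f x = F vs x"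
proof (induction vs arbitrary: x)
  case (Cons v vs)
  have "(iter_dderiv vs f has_derivative (\<lambda>v. F (v # vs) x)) (at x)"
    by (rule has_derivative_transform_within_open[OF FD[OF Cons.prems] S Cons.prems])
       (simp add: Cons.IH)
  then show ?case
    by (simp add: frechet_derivative_at[symmetric])
qed (simp add: F0)

lemma real_analytic_onI:
  assumes S: "open S"
    and F0: "\<And>x. x \<in> S \<Longrightarrow> F [] x = f x"
    and FD: "\<And>vs x. x \<in> S \<Longrightarrow> (F vs has_derivative (\<lambda>v. F (v # vs) x)) (at x)"
    and taylor: "\<And>x. x \<in> S \<Longrightarrow> \<exists>e>0. ball x e \<subseteq> S \<and> (\<forall>h. norm h < e \<longrightarrow>
           (\<lambda>j. (1 / fact j) *\<^sub>R F (replicate j h) x) sums f (x + h))"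
  shows "real_analytic_on S f"
  unfolding real_analytic_on_def smooth_on_def
proof (intro conjI ballI allI S)
  fix vs x
  assume x: "x \<in> S"
  have "(iter_dderiv vs f has_derivative (\<lambda>v. F (v # vs) x)) (at x)"
    by (rule has_derivative_transform_within_open[OF FD[OF x] S x])
       (simp add: iter_dderiv_eq_family[OF S F0 FD])
  then show "iter_dderiv vs f differentiable at x"
    by (rule differentiableI)
next
  fix x
  assume "x \<in> S"
  then show "\<exists>e>0. ball x e \<subseteq> S \<and> (\<forall>h. norm h < e \<longrightarrow>
           (\<lambda>j. (1 / fact j) *\<^sub>R iter_dderiv (replicate j h) f x) sums f (x + h))"
    using taylor by (simp add: iter_dderiv_eq_family[OF S F0 FD])
qed

lemma real_analytic_on_has_derivative:
  assumes "real_analytic_on S f" "x \<in> S"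
  shows "(iter_dderiv vs f has_derivative (\<lambda>v. iter_dderiv (v # vs) f x)) (at x)"
proof -
  have "iter_dderiv vs f differentiable at x"
    using assms unfolding real_analytic_on_def smooth_on_def by blast
  then show ?thesis
    using frechet_derivative_works by force
qed

lemma real_analytic_on_taylor:
  assumes "real_analytic_on S f" "x \<in> S"
  obtains e where "e > 0" "ball x e \<subseteq> S"
    "\<And>h. norm h < e \<Longrightarrow> (\<lambda>j. (1 / fact j) *\<^sub>R iter_dderiv (replicate j h) f x) sums f (x + h)"
  using assms unfolding real_analytic_on_def by blast

lemma real_analytic_on_cong:
  assumes f: "real_analytic_on S f" and eq: "\<And>x. x \<in> S \<Longrightarrow> f x = g x"
  shows "real_analytic_on S g"
proof (rule real_analytic_onI[where F = "\<lambda>vs. iter_dderiv vs f"])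
  show "open S"
    using f by (simp add: real_analytic_on_def)
  fix x
  assume x: "x \<in> S"
  then show "iter_dderiv [] f x = g x"
    by (simp add: eq)
  show "(iter_dderiv vs f has_derivative (\<lambda>v. iter_dderiv (v # vs) f x)) (at x)" for vs
    by (rule real_analytic_on_has_derivative[OF f x])
  obtain e where e: "e > 0" "ball x e \<subseteq> S" and taylor: "\<And>h. norm h < e \<Longrightarrow>
      (\<lambda>j. (1 / fact j) *\<^sub>R iter_dderiv (replicate j h) f x) sums f (x + h)"
    using real_analytic_on_taylor[OF f x] by blast
  have "(\<lambda>j. (1 / fact j) *\<^sub>R iter_dderiv (replicate j h) f x) sums g (x + h)" if "norm h < e" for h
  proof -
    have "x + h \<in> S"
      using that e(2) by (auto simp: dist_norm)
    with taylor[OF that] show ?thesis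
      by (simp add: eq)
  qed
  with e show "\<exists>e>0. ball x e \<subseteq> S \<and> (\<forall>h. norm h < e \<longrightarrow>
      (\<lambda>j. (1 / fact j) *\<^sub>R iter_dderiv (replicate j h) f x) sums g (x + h))"
    by blast
qed

lemma sums_Pair: "f sums a \<Longrightarrow> g sums b \<Longrightarrow> (\<lambda>n. (f n, g n)) sums (a, b)"
  unfolding sums_def sum_prod by (rule tendsto_Pair)

lemma real_analytic_on_Pair:
  assumes f: "real_analytic_on S f" and g: "real_analytic_on S g"
  shows "real_analytic_on S (\<lambda>x. (f x, g x))"
proof (rule real_analytic_onI[where F = "\<lambda>vs x. (iter_dderiv vs f x, iter_dderiv vs g x)"])
  show "open S"
    using f by (simp add: real_analytic_on_def)
  fix x
  assume x: "x \<in> S"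
  then show "(iter_dderiv [] f x, iter_dderiv [] g x) = (f x, g x)"
    by simp
  show "((\<lambda>x. (iter_dderiv vs f x, iter_dderiv vs g x)) has_derivative
      (\<lambda>v. (iter_dderiv (v # vs) f x, iter_dderiv (v # vs) g x))) (at x)" for vs
    by (intro has_derivative_Pair real_analytic_on_has_derivative[OF f x]
        real_analytic_on_has_derivative[OF g x])
  obtain e1 where "e1 > 0" "ball x e1 \<subseteq> S" and "\<And>h. norm h < e1 \<Longrightarrow>
      (\<lambda>j. (1 / fact j) *\<^sub>R iter_dderiv (replicate j h) f x) sums f (x + h)"
    using real_analytic_on_taylor[OF f x] by blast
  moreover obtain e2 where "e2 > 0" and "\<And>h. norm h < e2 \<Longrightarrow>
      (\<lambda>j. (1 / fact j) *\<^sub>R iter_dderiv (replicate j h) g x) sums g (x + h)"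
    using real_analytic_on_taylor[OF g x] by blast
  ultimately show "\<exists>e>0. ball x e \<subseteq> S \<and> (\<forall>h. norm h < e \<longrightarrow>
      (\<lambda>j. (1 / fact j) *\<^sub>R (iter_dderiv (replicate j h) f x, iter_dderiv (replicate j h) g x))
        sums (f (x + h), g (x + h)))"
    by (intro exI[of _ "min e1 e2"]) (auto intro!: sums_Pair[simplified])
qed

lemma sums_vanishing_from_3: "(\<And>j. j \<ge> 3 \<Longrightarrow> a j = 0) \<Longrightarrow> a sums (a 0 + a 1 + a 2)"
  using sums_finite[of "{..<3}" a] by (simp add: numeral_3_eq_3 numeral_2_eq_2 lessThan_Suc add_ac)

lemma real_analytic_onI_entire:
  assumes S: "open S"
    and F0: "\<And>x. x \<in> S \<Longrightarrow> F [] x = f x"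
    and FD: "\<And>vs x. x \<in> S \<Longrightarrow> (F vs has_derivative (\<lambda>v. F (v # vs) x)) (at x)"
    and taylor: "\<And>x h. x \<in> S \<Longrightarrow> (\<lambda>j. (1 / fact j) *\<^sub>R F (replicate j h) x) sums f (x + h)"
  shows "real_analytic_on S f"
proof (rule real_analytic_onI[OF S F0 FD])
  fix x
  assume "x \<in> S"
  then obtain e where "e > 0" "ball x e \<subseteq> S"
    using S open_contains_ball by blast
  with taylor[OF \<open>x \<in> S\<close>] show "\<exists>e>0. ball x e \<subseteq> S \<and> (\<forall>h. norm h < e \<longrightarrow>
      (\<lambda>j. (1 / fact j) *\<^sub>R F (replicate j h) x) sums f (x + h))"
    by blast
qed

fun affine_derivs :: "'b \<Rightarrow> ('a \<Rightarrow> 'b) \<Rightarrow> 'a list \<Rightarrow> 'a \<Rightarrow> 'b::monoid_add" where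
  "affine_derivs c L [] = (\<lambda>z. c + L z)"
| "affine_derivs c L [v] = (\<lambda>z. L v)"
| "affine_derivs c L (u # v # vs) = (\<lambda>z. 0)"

lemma real_analytic_on_affine:
  fixes L :: "'a::euclidean_space \<Rightarrow> 'b::euclidean_space"
  assumes L: "bounded_linear L" and S: "open S"
  shows "real_analytic_on S (\<lambda>z. c + L z)"
proof (rule real_analytic_onI_entire[OF S, where F = "affine_derivs c L"])
  fix vs x
  show "(affine_derivs c L vs has_derivative (\<lambda>v. affine_derivs c L (v # vs) x)) (at x)"
  proof (cases vs rule: remdups_adj.cases)
    case 1
    have "((\<lambda>z. c + L z) has_derivative (\<lambda>v. 0 + L v)) (at x)"
      by (intro has_derivative_add has_derivative_const bounded_linear_imp_has_derivative[OF L])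
    then show ?thesis
      by (simp add: 1)
  qed simp_all
  fix h
  have "affine_derivs c L (replicate j h) x = 0" if "j \<ge> 3" for j
    using that by (auto simp: numeral_3_eq_3 dest!: le_Suc_ex)
  then show "(\<lambda>j. (1 / fact j) *\<^sub>R affine_derivs c L (replicate j h) x) sums (c + L (x + h))"
    using sums_vanishing_from_3[of "\<lambda>j. (1 / fact j) *\<^sub>R affine_derivs c L (replicate j h) x"]
    by (simp add: numeral_2_eq_2 linear_add[OF bounded_linear.linear[OF L]] add.assoc)
qed simp

lemma real_analytic_on_linear: "bounded_linear L \<Longrightarrow> open S \<Longrightarrow> real_analytic_on S L"
  using real_analytic_on_affine[of L S 0] by simp

fun bilinear_derivs ::
    "('c \<Rightarrow> 'd \<Rightarrow> 'b::monoid_add) \<Rightarrow> ('a \<Rightarrow> 'c) \<Rightarrow> ('a \<Rightarrow> 'd) \<Rightarrow> 'a list \<Rightarrow> 'a \<Rightarrow> 'b" where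
  "bilinear_derivs B L1 L2 [] = (\<lambda>z. B (L1 z) (L2 z))"
| "bilinear_derivs B L1 L2 [v] = (\<lambda>z. B (L1 v) (L2 z) + B (L1 z) (L2 v))"
| "bilinear_derivs B L1 L2 [w, v] = (\<lambda>z. B (L1 v) (L2 w) + B (L1 w) (L2 v))"
| "bilinear_derivs B L1 L2 (u # w # v # vs) = (\<lambda>z. 0)"

lemma has_derivative_bilinear_derivs:
  fixes L1 :: "'a::real_normed_vector \<Rightarrow> 'c::real_normed_vector" and L2 :: "'a \<Rightarrow> 'd::real_normed_vector"
    and B :: "'c \<Rightarrow> 'd \<Rightarrow> 'b::real_normed_vector"
  assumes B: "bounded_bilinear B" and L1: "bounded_linear L1" and L2: "bounded_linear L2"
  shows "(bilinear_derivs B L1 L2 vs has_derivative (\<lambda>v. bilinear_derivs B L1 L2 (v # vs) x)) (at x)"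
proof -
  have dL1: "(L1 has_derivative L1) (at x)" and dL2: "(L2 has_derivative L2) (at x)"
    using L1 L2 by (simp_all add: bounded_linear_imp_has_derivative)
  show ?thesis
  proof (cases vs rule: remdups_adj.cases)
    case 1
    show ?thesis
      unfolding 1 bilinear_derivs.simps
      by (rule has_derivative_eq_rhs[OF bounded_bilinear.FDERIV[OF B dL1 dL2]])
         (simp add: fun_eq_iff add.commute)
  next
    case (2 w)
    show ?thesis
      unfolding 2 bilinear_derivs.simps
      by (rule has_derivative_eq_rhs[OF has_derivative_add[OF
            bounded_bilinear.FDERIV[OF B has_derivative_const dL2]
            bounded_bilinear.FDERIV[OF B dL1 has_derivative_const]]])
         (simp add: fun_eq_iff bounded_bilinear.zero_left[OF B] bounded_bilinear.zero_right[OF B] add.commute)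
  next
    case (3 u w ws)
    then show ?thesis
      by (cases ws) simp_all
  qed
qed

lemma real_analytic_on_bilinear:
  fixes L1 :: "'a::euclidean_space \<Rightarrow> 'c::real_normed_vector" and L2 :: "'a \<Rightarrow> 'd::real_normed_vector"
    and B :: "'c \<Rightarrow> 'd \<Rightarrow> 'b::euclidean_space"
  assumes B: "bounded_bilinear B" and L1: "bounded_linear L1" and L2: "bounded_linear L2"
    and S: "open S"
  shows "real_analytic_on S (\<lambda>z. B (L1 z) (L2 z))"
proof (rule real_analytic_onI_entire[OF S _ has_derivative_bilinear_derivs[OF B L1 L2]])
  fix x h
  let ?t = "\<lambda>j. (1 / fact j) *\<^sub>R bilinear_derivs B L1 L2 (replicate j h) x"
  have "?t sums (?t 0 + ?t 1 + ?t 2)"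
    by (rule sums_vanishing_from_3) (auto simp: numeral_3_eq_3 dest!: le_Suc_ex)
  moreover have "?t 2 = B (L1 h) (L2 h)"
    by (simp add: numeral_2_eq_2 scaleR_2[symmetric])
  ultimately show "?t sums B (L1 (x + h)) (L2 (x + h))"
    by (simp add: bounded_bilinear.add_left[OF B] bounded_bilinear.add_right[OF B]
        linear_add[OF bounded_linear.linear[OF L1]] linear_add[OF bounded_linear.linear[OF L2]] add_ac)
qed simp

section \<open>Analyticity of the matrix inverse\<close>

text \<open>The iterated derivatives of \<open>z \<mapsto> (P z)\<inverse>\<close> are sums of words
  \<open>A\<^sub>0 Hi A\<^sub>1 Hi \<dots> Hi A\<^sub>k\<close> with \<open>Hi = (P z)\<inverse>\<close>; differentiating in direction \<open>v\<close> replaces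
  one occurrence of \<open>Hi\<close> by \<open>Hi (- P v) Hi\<close>, i.e. inserts the letter \<open>- P v\<close> into one gap.\<close>

fun word_eval :: "real^'n^'n \<Rightarrow> (real^'n^'n) list \<Rightarrow> real^'n^'n" where
  "word_eval Hi [] = mat 1"
| "word_eval Hi [A] = A"
| "word_eval Hi (A # B # ws) = A ** Hi ** word_eval Hi (B # ws)"

fun gap_insertions :: "'a \<Rightarrow> 'a list \<Rightarrow> 'a list list" where
  "gap_insertions v [] = []"
| "gap_insertions v [A] = []"
| "gap_insertions v (A # B # ws) = (A # v # B # ws) # map (Cons A) (gap_insertions v (B # ws))"

definition words_eval :: "real^'n^'n \<Rightarrow> (real^'n^'n) list list \<Rightarrow> real^'n^'n" where
  "words_eval Hi Ws = sum_list (map (word_eval Hi) Ws)"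

definition words_deriv :: "'a \<Rightarrow> 'a list list \<Rightarrow> 'a list list" where
  "words_deriv v Ws = concat (map (gap_insertions v) Ws)"

primrec matrix_inv_deriv_words :: "('a \<Rightarrow> real^'n^'n) \<Rightarrow> 'a list \<Rightarrow> (real^'n^'n) list list" where
  "matrix_inv_deriv_words P [] = [[mat 1, mat 1]]"
| "matrix_inv_deriv_words P (v # vs) = words_deriv (- P v) (matrix_inv_deriv_words P vs)"

lemma gap_insertions_nonempty: "w \<in> set (gap_insertions v ws) \<Longrightarrow> w \<noteq> []"
  by (induction v ws rule: gap_insertions.induct) auto

lemma word_eval_Cons: "w \<noteq> [] \<Longrightarrow> word_eval Hi (A # w) = A ** Hi ** word_eval Hi w"
  by (cases w) auto

lemma words_eval_map_Cons:
  "(\<And>w. w \<in> set Ws \<Longrightarrow> w \<noteq> []) \<Longrightarrow> words_eval Hi (map (Cons A) Ws) = A ** Hi ** words_eval Hi Ws"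
  by (induction Ws) (simp_all add: words_eval_def word_eval_Cons matrix_add_ldistrib)

lemma has_derivative_word_eval:
  fixes P :: "'a::real_normed_vector \<Rightarrow> real^'n^'n"
  assumes P: "bounded_linear P" and inv: "invertible (P x)"
  shows "((\<lambda>z. word_eval (matrix_inv (P z)) ws) has_derivative
      (\<lambda>v. words_eval (matrix_inv (P x)) (gap_insertions (- P v) ws))) (at x)"
proof (induction ws rule: induct_list012)
  case (3 A B ws)
  define Hi where "Hi = matrix_inv (P x)"
  have "((\<lambda>z. A ** matrix_inv (P z)) has_derivative (\<lambda>v. A ** (- (Hi ** P v ** Hi)))) (at x)"
    unfolding Hi_def
    by (rule bounded_linear.has_derivative[OF bounded_linear_matrix_mult_left_comp[OF bounded_linear_ident]
          has_derivative_compose[OF bounded_linear_imp_has_derivative[OF P] matrix_inv_has_derivative[OF inv]]])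
  from bounded_bilinear.FDERIV[OF bounded_bilinear_matrix_mult this "3.IH"(2)]
  have "((\<lambda>z. word_eval (matrix_inv (P z)) (A # B # ws)) has_derivative
      (\<lambda>v. (A ** Hi) ** words_eval Hi (gap_insertions (- P v) (B # ws))
        + (A ** (- (Hi ** P v ** Hi))) ** word_eval Hi (B # ws))) (at x)"
    by (simp add: Hi_def)
  moreover have "(A ** Hi) ** words_eval Hi (gap_insertions (- P v) (B # ws))
        + (A ** (- (Hi ** P v ** Hi))) ** word_eval Hi (B # ws)
      = words_eval Hi (gap_insertions (- P v) (A # B # ws))" for v
  proof -
    have "words_eval Hi (gap_insertions (- P v) (A # B # ws))
        = word_eval Hi (A # - P v # B # ws) + words_eval Hi (map (Cons A) (gap_insertions (- P v) (B # ws)))"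
      by (simp add: words_eval_def)
    also have "\<dots> = (A ** (- (Hi ** P v ** Hi))) ** word_eval Hi (B # ws)
        + (A ** Hi) ** words_eval Hi (gap_insertions (- P v) (B # ws))"
      by (simp add: words_eval_map_Cons gap_insertions_nonempty matrix_mult_simps matrix_mul_assoc)
    finally show ?thesis
      by (simp add: add.commute)
  qed
  ultimately show ?case
    by (simp add: Hi_def)
qed (simp_all add: words_eval_def)

lemma has_derivative_words_eval:
  fixes P :: "'a::real_normed_vector \<Rightarrow> real^'n^'n"
  assumes P: "bounded_linear P" and inv: "invertible (P x)"
  shows "((\<lambda>z. words_eval (matrix_inv (P z)) Ws) has_derivative
      (\<lambda>v. words_eval (matrix_inv (P x)) (words_deriv (- P v) Ws))) (at x)"
proof (induction Ws)
  case (Cons w Ws)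
  from has_derivative_add[OF has_derivative_word_eval[OF P inv] this]
  show ?case
    by (simp add: words_eval_def words_deriv_def)
qed (simp add: words_eval_def words_deriv_def)

lemma gap_insertions_replicate:
  "gap_insertions v (a # replicate k v @ [d]) = replicate (Suc k) (a # replicate (Suc k) v @ [d])"
proof (induction k arbitrary: a)
  case (Suc k)
  have "gap_insertions v (a # replicate (Suc k) v @ [d])
      = (a # v # v # (replicate k v @ [d])) # map (Cons a) (gap_insertions v (v # replicate k v @ [d]))"
    by simp
  also have "\<dots> = replicate (Suc (Suc k)) (a # replicate (Suc (Suc k)) v @ [d])"
    using Suc.IH[of v] by (simp add: replicate_append_same[symmetric])
  finally show ?case .
qed simp

lemma concat_replicate_replicate: "concat (replicate m (replicate n x)) = replicate (m * n) x"
  by (induction m) (simp_all add: replicate_add)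

lemma matrix_inv_deriv_words_replicate:
  "matrix_inv_deriv_words P (replicate j h)
    = replicate (fact j) (mat 1 # replicate j (- P h) @ [mat 1])"
proof (induction j)
  case (Suc j)
  have "matrix_inv_deriv_words P (replicate (Suc j) h)
      = concat (map (gap_insertions (- P h)) (replicate (fact j) (mat 1 # replicate j (- P h) @ [mat 1])))"
    by (simp add: Suc.IH words_deriv_def)
  also have "\<dots> = concat (replicate (fact j) (replicate (Suc j) (mat 1 # replicate (Suc j) (- P h) @ [mat 1])))"
    by (simp add: gap_insertions_replicate)
  also have "\<dots> = replicate (fact (Suc j)) (mat 1 # replicate (Suc j) (- P h) @ [mat 1])"
    by (simp only: concat_replicate_replicate, simp add: mult.commute)
  finally show ?case .
qed simp

lemma word_eval_replicate:
  "word_eval Hi (a # replicate j q @ [d]) = a ** mpow (Hi ** q) j ** Hi ** d"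
proof (induction j arbitrary: a)
  case (Suc j)
  then show ?case
    by (simp add: word_eval_Cons matrix_mul_assoc)
qed simp

text \<open>Along a single direction all \<open>j!\<close> words coincide, so the Taylor series of the inverse
  is its Neumann series.\<close>

lemma matrix_inv_taylor_term:
  "(1 / fact j) *\<^sub>R words_eval Hi (matrix_inv_deriv_words P (replicate j h))
    = mpow (- (Hi ** P h)) j ** Hi"
proof -
  have "words_eval Hi (replicate m w) = real m *\<^sub>R word_eval Hi w" for m w
    by (induction m) (simp_all add: words_eval_def algebra_simps)
  then show ?thesis
    by (simp add: matrix_inv_deriv_words_replicate word_eval_replicate matrix_mult_simps)
qed

lemma real_analytic_on_matrix_inv:
  fixes P :: "'a::euclidean_space \<Rightarrow> real^'n^'n"
  assumes P: "bounded_linear P" and S: "open S" and inv: "\<And>z. z \<in> S \<Longrightarrow> invertible (P z)"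
  shows "real_analytic_on S (\<lambda>z. matrix_inv (P z))"
proof (rule real_analytic_onI[OF S, where F = "\<lambda>vs z. words_eval (matrix_inv (P z)) (matrix_inv_deriv_words P vs)"])
  fix x
  assume x: "x \<in> S"
  then show "words_eval (matrix_inv (P x)) (matrix_inv_deriv_words P []) = matrix_inv (P x)"
    by (simp add: words_eval_def)
  show "((\<lambda>z. words_eval (matrix_inv (P z)) (matrix_inv_deriv_words P vs)) has_derivative
      (\<lambda>v. words_eval (matrix_inv (P x)) (matrix_inv_deriv_words P (v # vs)))) (at x)" for vs
    using has_derivative_words_eval[OF P inv[OF x]] by simp
  define Hi where "Hi = matrix_inv (P x)"
  obtain e0 where e0: "e0 > 0" "ball x e0 \<subseteq> S"
    using S x open_contains_ball by blast
  obtain K where K: "K > 0" "\<And>h. norm (Hi ** P h) \<le> norm h * K"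
    using bounded_linear.pos_bounded[OF bounded_linear_matrix_mult_left_comp[OF P]] by blast
  define e where "e = min e0 (1 / K)"
  have "(\<lambda>j. mpow (- (Hi ** P h)) j ** Hi) sums matrix_inv (P (x + h))" if h: "norm h < e" for h
  proof -
    have "x + h \<in> S"
      using h e0 by (auto simp: e_def dist_norm)
    then have "invertible (P x + P h)"
      using inv linear_add[OF bounded_linear.linear[OF P]] by metis
    moreover have "norm (Hi ** P h) < 1"
      using K(2)[of h] h K(1) by (simp add: e_def field_simps)
    ultimately show ?thesis
      unfolding Hi_def linear_add[OF bounded_linear.linear[OF P]]
      by (rule matrix_inv_neumann_sums[OF inv[OF x]])
  qed
  then show "\<exists>e>0. ball x e \<subseteq> S \<and> (\<forall>h. norm h < e \<longrightarrow>
      (\<lambda>j. (1 / fact j) *\<^sub>R words_eval (matrix_inv (P x)) (matrix_inv_deriv_words P (replicate j h)))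
        sums matrix_inv (P (x + h)))"
    using e0 K(1) by (intro exI[of _ e]) (auto simp: e_def matrix_inv_taylor_term Hi_def)
qed

lemma invertible_gram:
  fixes U :: "real^'r^'n"
  assumes "rank U = CARD('r)"
  shows "invertible (transpose U ** U)"
proof -
  have "x = 0" if "(transpose U ** U) *v x = 0" for x :: "real^'r"
  proof -
    have "(U *v x) \<bullet> (U *v x) = x \<bullet> ((transpose U ** U) *v x)"
      using dot_lmul_matrix[of x "transpose U" "U *v x"]
      by (simp add: matrix_vector_mul_assoc[symmetric] del: transpose_matrix_vector)
    with that have "U *v x = 0"
      by simp
    then show "x = 0"
      using full_rank_injective[of U] assms by (metis injD matrix_vector_mult_0_right)
  qed
  then show ?thesis
    using matrix_left_invertible_ker invertible_left_inverse by blast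
qed

lemma pinv_mult_self:
  fixes U :: "real^'r^'n"
  assumes "rank U = CARD('r)"
  shows "pinv U ** U = mat 1"
  using matrix_inv_left[OF invertible_gram[OF assms]] by (simp add: pinv_def matrix_mul_assoc)

lemma pinv_mult_orthogonal:
  fixes U :: "real^'r^'n" and W :: "real^'p^'n"
  assumes "transpose U ** W = 0"
  shows "pinv U ** W = 0"
  using assms by (simp add: pinv_def matrix_mul_assoc[symmetric])

lemma mexp_square_zero:
  fixes N :: "real^'n^'n"
  assumes "N ** N = 0"
  shows "mexp N = mat 1 + N"
proof -
  let ?t = "\<lambda>k. (1 / fact k) *\<^sub>R mpow N k"
  have "?t sums (?t 0 + ?t 1 + ?t 2)"
    by (rule sums_vanishing_from_3) (auto simp: assms matrix_mul_assoc numeral_3_eq_3 dest!: le_Suc_ex)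
  then have "?t sums (mat 1 + N)"
    by (simp add: assms matrix_mul_assoc numeral_2_eq_2)
  then show ?thesis
    unfolding mexp_def by (rule sums_unique[symmetric])
qed

section \<open>The groups \<open>G_W\<close>\<close>

locale complementary_frame =
  fixes W :: "real^'r^'k" and Wperp :: "real^'p^'k"
  assumes rank_W: "rank W = CARD('r)" and rank_Wperp: "rank Wperp = CARD('p)"
    and orthogonal: "transpose W ** Wperp = 0"
begin

lemma pinv_W: "pinv W ** W = mat 1"
  by (rule pinv_mult_self[OF rank_W])

lemma pinv_Wperp: "pinv Wperp ** Wperp = mat 1"
  by (rule pinv_mult_self[OF rank_Wperp])

lemma pinv_W_Wperp: "pinv W ** Wperp = 0"
  by (rule pinv_mult_orthogonal[OF orthogonal])

lemma pinv_Wperp_W: "pinv Wperp ** W = 0"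
proof (rule pinv_mult_orthogonal)
  have "transpose Wperp ** W = transpose (transpose W ** Wperp)"
    by (simp add: matrix_transpose_mul)
  also have "\<dots> = transpose 0"
    by (simp only: orthogonal)
  finally show "transpose Wperp ** W = 0"
    by (simp add: transpose_def vec_eq_iff)
qed

lemma pinv_W_graph: "pinv W ** (W + Wperp ** X) = mat 1"
  by (simp add: matrix_add_ldistrib matrix_mul_assoc pinv_W pinv_W_Wperp)

lemma pinv_Wperp_graph: "pinv Wperp ** (W + Wperp ** X) = X"
  by (simp add: matrix_add_ldistrib matrix_mul_assoc pinv_Wperp pinv_Wperp_W)

definition generator :: "real^'r^'p \<Rightarrow> real^'k^'k" where
  "generator X = Wperp ** X ** pinv W"

lemma generator_mult_generator: "generator X ** generator X' = 0"
proof -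
  have "generator X ** generator X' = Wperp ** X ** (pinv W ** Wperp) ** X' ** pinv W"
    by (simp add: generator_def matrix_mul_assoc)
  then show ?thesis
    by (simp add: pinv_W_Wperp)
qed

lemma mexp_generator: "mexp (generator X) = mat 1 + generator X"
  by (rule mexp_square_zero[OF generator_mult_generator])

lemma generator_add: "generator (X + X') = generator X + generator X'"
  by (simp add: generator_def matrix_add_ldistrib matrix_add_rdistrib)

lemma pinv_Wperp_generator: "pinv Wperp ** generator X ** W = X"
proof -
  have "pinv Wperp ** generator X ** W = (pinv Wperp ** Wperp) ** X ** (pinv W ** W)"
    by (simp add: generator_def matrix_mul_assoc)
  then show ?thesis
    by (simp add: pinv_Wperp pinv_W)
qed

lemma GW_eq: "GW W Wperp = range (\<lambda>X. mat 1 + generator X)"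
  by (simp add: GW_def mexp_generator[unfolded generator_def] generator_def)

lemma bounded_linear_generator: "bounded_linear generator"
  unfolding generator_def
  by (intro bounded_linear_matrix_mult_left_comp bounded_linear_matrix_mult_right_comp bounded_linear_ident)

end

section \<open>The chart and the group structure of \<open>U_Z\<close>\<close>

definition param_mult ::
    "('a::plus) \<times> ('b::plus) \<times> (real^'r^'r) \<Rightarrow> 'a \<times> 'b \<times> (real^'r^'r) \<Rightarrow> 'a \<times> 'b \<times> (real^'r^'r)"
  where "param_mult a b = (fst a + fst b, fst (snd a) + fst (snd b), snd (snd a) ** snd (snd b))"

definition param_inverse :: "('a::uminus) \<times> ('b::uminus) \<times> (real^'r^'r) \<Rightarrow> 'a \<times> 'b \<times> (real^'r^'r)"
  where "param_inverse a = (- fst a, - fst (snd a), matrix_inv (snd (snd a)))"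

lemma open_param_dom: "open param_dom"
  unfolding param_dom_def GL_def by (intro open_Times open_UNIV open_invertible)

lemma param_mult_closed: "a \<in> param_dom \<Longrightarrow> b \<in> param_dom \<Longrightarrow> param_mult a b \<in> param_dom"
  by (auto simp: param_mult_def param_dom_def GL_def intro: invertible_mult)

lemma param_mult_assoc:
  fixes a b c :: "('a::semigroup_add) \<times> ('b::semigroup_add) \<times> (real^'r^'r)"
  shows "param_mult (param_mult a b) c = param_mult a (param_mult b c)"
  by (simp add: param_mult_def add.assoc matrix_mul_assoc)

lemma param_inverse_closed: "a \<in> param_dom \<Longrightarrow> param_inverse a \<in> param_dom"
  by (auto simp: param_inverse_def param_dom_def GL_def invertible_matrix_inv)

lemma real_analytic_on_param_mult:
  "real_analytic_on (param_dom \<times> param_dom) (\<lambda>z. param_mult (fst z) (snd z))"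
  unfolding param_mult_def
  by (intro real_analytic_on_Pair real_analytic_on_linear
      real_analytic_on_bilinear[OF bounded_bilinear_matrix_mult]
      bounded_linear_add bounded_linear_fst_comp bounded_linear_snd_comp bounded_linear_ident
      open_Times open_param_dom)

lemma real_analytic_on_param_inverse: "real_analytic_on param_dom param_inverse"
  unfolding param_inverse_def
  by (intro real_analytic_on_Pair real_analytic_on_linear real_analytic_on_matrix_inv
      bounded_linear_minus bounded_linear_fst_comp bounded_linear_snd_comp bounded_linear_ident
      open_param_dom) (auto simp: param_dom_def GL_def)

locale chart_frames = U: complementary_frame U Uperp + V: complementary_frame V Vperp
  for U :: "real^'r^'n" and Uperp :: "real^'p^'n" and V :: "real^'r^'m" and Vperp :: "real^'q^'m"
begin

abbreviation chart_inv where "chart_inv \<equiv> thetainv U Uperp V Vperp"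
abbreviation chart where "chart \<equiv> thetaZ U Uperp V Vperp"
abbreviation UZs where "UZs \<equiv> UZ U Uperp V Vperp"
abbreviation star where "star \<equiv> starZ U Uperp V Vperp"
abbreviation eta where "eta \<equiv> etaZ U Uperp V Vperp"

definition UZ_group :: "(real^'m^'n) monoid" where
  "UZ_group = \<lparr>carrier = UZs, mult = star, one = U ** transpose V\<rparr>"

lemma
  shows chart_inv_H: "pinv U ** chart_inv (X, Y, H) ** transpose (pinv V) = H"
    and chart_inv_XH: "pinv Uperp ** chart_inv (X, Y, H) ** transpose (pinv V) = X ** H"
    and chart_inv_HY: "pinv U ** chart_inv (X, Y, H) ** transpose (pinv Vperp) = H ** transpose Y"
proof -
  have sandwich: "L ** (A ** H ** transpose B) ** transpose R = (L ** A) ** H ** transpose (R ** B)"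
    for L A B R :: "real^_^_"
    by (simp add: matrix_transpose_mul matrix_mul_assoc)
  show "pinv U ** chart_inv (X, Y, H) ** transpose (pinv V) = H"
    "pinv Uperp ** chart_inv (X, Y, H) ** transpose (pinv V) = X ** H"
    "pinv U ** chart_inv (X, Y, H) ** transpose (pinv Vperp) = H ** transpose Y"
    by (simp_all add: thetainv_def sandwich U.pinv_W_graph U.pinv_Wperp_graph
        V.pinv_W_graph V.pinv_Wperp_graph)
qed

lemma inj_on_chart_inv: "inj_on chart_inv param_dom"
proof (rule inj_onI)
  fix a b
  assume a: "a \<in> param_dom" and "b \<in> param_dom" and eq: "chart_inv a = chart_inv b"
  obtain X Y H X' Y' H' where ab: "a = (X, Y, H)" "b = (X', Y', H')"
    by (cases a, cases b) auto
  have H: "invertible H"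
    using a by (simp add: ab param_dom_def GL_def)
  have HH': "H = H'"
    using chart_inv_H[of X Y H] chart_inv_H[of X' Y' H'] eq by (simp add: ab)
  have "X ** H ** matrix_inv H = X' ** H ** matrix_inv H"
    using chart_inv_XH[of X Y H] chart_inv_XH[of X' Y' H'] eq by (simp add: ab HH')
  then have "X = X'"
    by (simp add: matrix_mul_assoc[symmetric] matrix_inv_right[OF H])
  moreover have "transpose (matrix_inv H ** (H ** transpose Y)) = transpose (matrix_inv H ** (H ** transpose Y'))"
    using chart_inv_HY[of X Y H] chart_inv_HY[of X' Y' H'] eq by (simp add: ab HH')
  then have "Y = Y'"
    by (simp add: matrix_mul_assoc matrix_inv_left[OF H])
  ultimately show "a = b"
    by (simp add: ab HH')
qed

lemma bij_betw_chart_inv: "bij_betw chart_inv param_dom UZs"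
  by (simp add: bij_betw_def inj_on_chart_inv UZ_def)

lemma bij_betw_chart: "bij_betw chart UZs param_dom"
  unfolding thetaZ_def by (rule bij_betw_inv_into[OF bij_betw_chart_inv])

lemma chart_chart_inv: "a \<in> param_dom \<Longrightarrow> chart (chart_inv a) = a"
  unfolding thetaZ_def by (rule inv_into_f_f[OF inj_on_chart_inv])

lemma inv_into_chart: "a \<in> param_dom \<Longrightarrow> inv_into UZs chart a = chart_inv a"
  by (rule inv_into_f_eq[OF bij_betw_imp_inj_on[OF bij_betw_chart]])
     (simp_all add: UZ_def chart_chart_inv)

lemma UZ_cases:
  assumes "A \<in> UZs"
  obtains a where "a \<in> param_dom" "A = chart_inv a"
  using assms by (auto simp: UZ_def)

lemma star_chart_inv:
  "a \<in> param_dom \<Longrightarrow> b \<in> param_dom \<Longrightarrow> star (chart_inv a) (chart_inv b) = chart_inv (param_mult a b)"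
  by (simp add: starZ_def chart_chart_inv param_mult_def split: prod.splits)

lemma one_eq_chart_inv: "U ** transpose V = chart_inv (0, 0, mat 1)"
  by (simp add: thetainv_def)

lemma one_in_param_dom: "(0, 0, mat 1) \<in> param_dom"
  by (simp add: param_dom_def GL_def invertible_def)

lemma param_inverse_mult: "a \<in> param_dom \<Longrightarrow> param_mult (param_inverse a) a = (0, 0, mat 1)"
  by (auto simp: param_mult_def param_inverse_def param_dom_def GL_def matrix_inv_left)

lemma group_UZ: "group UZ_group"
proof (rule groupI)
  show "\<one>\<^bsub>UZ_group\<^esub> \<in> carrier UZ_group"
    by (simp add: UZ_group_def one_eq_chart_inv UZ_def one_in_param_dom)
  fix x
  assume "x \<in> carrier UZ_group"
  then obtain a where a: "a \<in> param_dom" "x = chart_inv a"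
    by (auto simp: UZ_group_def elim: UZ_cases)
  show "\<one>\<^bsub>UZ_group\<^esub> \<otimes>\<^bsub>UZ_group\<^esub> x = x"
    using a by (simp add: UZ_group_def one_eq_chart_inv star_chart_inv one_in_param_dom param_mult_def)
  show "\<exists>y\<in>carrier UZ_group. y \<otimes>\<^bsub>UZ_group\<^esub> x = \<one>\<^bsub>UZ_group\<^esub>"
    using a param_inverse_closed[OF a(1)]
    by (intro bexI[of _ "chart_inv (param_inverse a)"])
       (simp_all add: UZ_group_def star_chart_inv param_inverse_mult one_eq_chart_inv UZ_def)
  fix y
  assume "y \<in> carrier UZ_group"
  then obtain b where b: "b \<in> param_dom" "y = chart_inv b"
    by (auto simp: UZ_group_def elim: UZ_cases)
  show "x \<otimes>\<^bsub>UZ_group\<^esub> y \<in> carrier UZ_group"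
    using a b by (simp add: UZ_group_def star_chart_inv UZ_def param_mult_closed)
  fix z
  assume "z \<in> carrier UZ_group"
  then obtain c where c: "c \<in> param_dom" "z = chart_inv c"
    by (auto simp: UZ_group_def elim: UZ_cases)
  show "x \<otimes>\<^bsub>UZ_group\<^esub> y \<otimes>\<^bsub>UZ_group\<^esub> z = x \<otimes>\<^bsub>UZ_group\<^esub> (y \<otimes>\<^bsub>UZ_group\<^esub> z)"
    using a b c by (simp add: UZ_group_def star_chart_inv param_mult_closed param_mult_assoc)
qed

lemma inv_chart_inv: "a \<in> param_dom \<Longrightarrow> inv\<^bsub>UZ_group\<^esub> (chart_inv a) = chart_inv (param_inverse a)"
  using param_inverse_closed[of a]
  by (intro group.inv_equality[OF group_UZ])
     (simp_all add: UZ_group_def star_chart_inv param_inverse_mult one_eq_chart_inv UZ_def)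

lemma lie_group_chart_UZ: "lie_group_chart UZs star (U ** transpose V) chart param_dom"
proof -
  have "real_analytic_on (param_dom \<times> param_dom)
      (\<lambda>z. chart (star (inv_into UZs chart (fst z)) (inv_into UZs chart (snd z))))"
    by (rule real_analytic_on_cong[OF real_analytic_on_param_mult])
       (auto simp: inv_into_chart star_chart_inv chart_chart_inv param_mult_closed)
  moreover have "real_analytic_on param_dom (\<lambda>a. chart (inv\<^bsub>UZ_group\<^esub> (inv_into UZs chart a)))"
    by (rule real_analytic_on_cong[OF real_analytic_on_param_inverse])
       (simp add: inv_into_chart inv_chart_inv chart_chart_inv param_inverse_closed)
  ultimately show ?thesis
    using open_param_dom bij_betw_chart group_UZ
    by (simp add: lie_group_chart_def UZ_group_def)
qed

section \<open>The isomorphism \<open>\<eta>_Z\<close>\<close>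

lemma eta_chart_inv:
  "a \<in> param_dom \<Longrightarrow>
    eta (chart_inv a) = (mat 1 + U.generator (fst a), mat 1 + V.generator (fst (snd a)), snd (snd a))"
  by (auto simp: etaZ_def chart_chart_inv U.mexp_generator[unfolded U.generator_def]
      V.mexp_generator[unfolded V.generator_def] U.generator_def V.generator_def split: prod.split)

abbreviation target_group where
  "target_group \<equiv> mat_grp (GW U Uperp) \<times>\<times> mat_grp (GW V Vperp) \<times>\<times> mat_grp GL"

lemma eta_image: "eta ` UZs = GW U Uperp \<times> GW V Vperp \<times> GL"
proof -
  have "eta ` UZs = (\<lambda>a. eta (chart_inv a)) ` param_dom"
    by (simp add: UZ_def image_image)
  also have "\<dots> = (\<lambda>(X, Y, H). (mat 1 + U.generator X, mat 1 + V.generator Y, H)) ` param_dom"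
    by (intro image_cong refl) (auto simp: eta_chart_inv)
  also have "\<dots> = GW U Uperp \<times> GW V Vperp \<times> GL"
    by (auto simp: param_dom_def U.GW_eq V.GW_eq image_iff)
  finally show ?thesis .
qed

lemma inj_on_eta: "inj_on eta UZs"
proof (rule inj_onI)
  fix x y
  assume "x \<in> UZs" "y \<in> UZs" and eq: "eta x = eta y"
  then obtain a b where a: "a \<in> param_dom" "x = chart_inv a" and b: "b \<in> param_dom" "y = chart_inv b"
    by (auto elim!: UZ_cases)
  have "pinv Uperp ** U.generator (fst a) ** U = pinv Uperp ** U.generator (fst b) ** U"
    and "pinv Vperp ** V.generator (fst (snd a)) ** V = pinv Vperp ** V.generator (fst (snd b)) ** V"
    and "snd (snd a) = snd (snd b)"
    using eq a b by (simp_all add: eta_chart_inv)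
  then have "a = b"
    by (simp add: U.pinv_Wperp_generator V.pinv_Wperp_generator prod_eq_iff)
  with a b show "x = y"
    by simp
qed

lemma eta_iso: "eta \<in> iso UZ_group target_group"
proof -
  have "eta (star x y) = eta x \<otimes>\<^bsub>target_group\<^esub> eta y" if x: "x \<in> UZs" and y: "y \<in> UZs" for x y
  proof -
    obtain a b where a: "a \<in> param_dom" "x = chart_inv a" and b: "b \<in> param_dom" "y = chart_inv b"
      using UZ_cases[OF x] UZ_cases[OF y] by metis
    have one_plus: "(mat 1 + A) ** (mat 1 + B) = mat 1 + (A + B) + A ** B" for A B :: "real^_^_"
      by (simp add: matrix_add_ldistrib matrix_add_rdistrib add.assoc)
    show ?thesis
      using a b param_mult_closed[OF a(1) b(1)]
      by (simp add: one_plus star_chart_inv eta_chart_inv param_mult_def mat_grp_def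
          U.generator_add V.generator_add U.generator_mult_generator V.generator_mult_generator)
  qed
  then show ?thesis
    using inj_on_eta eta_image
    by (auto simp: iso_def hom_def bij_betw_def UZ_group_def mat_grp_def)
qed

lemma real_analytic_on_eta_chart_inv: "real_analytic_on param_dom (\<lambda>a. eta (chart_inv a))"
proof (rule real_analytic_on_cong[OF real_analytic_on_affine[where c = "(mat 1, mat 1, 0)", OF _ open_param_dom]])
  show "bounded_linear (\<lambda>a. (U.generator (fst a), V.generator (fst (snd a)), snd (snd a)))"
    by (intro bounded_linear_Pair bounded_linear_compose[OF U.bounded_linear_generator]
        bounded_linear_compose[OF V.bounded_linear_generator]
        bounded_linear_fst_comp bounded_linear_snd_comp bounded_linear_ident)
qed (simp add: eta_chart_inv)

lemma analytic_on_subset_chart_inv_eta: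
  "analytic_on_subset (GW U Uperp \<times> GW V Vperp \<times> GL) (\<lambda>y. chart (inv_into UZs eta y))"
proof -
  define L where "L z = (pinv Uperp ** fst z ** U, pinv Vperp ** fst (snd z) ** V, snd (snd z))"
    for z :: "(real^'n^'n) \<times> (real^'m^'m) \<times> (real^'r^'r)"
  have "real_analytic_on UNIV L"
    unfolding L_def
    by (intro real_analytic_on_linear bounded_linear_Pair open_UNIV
        bounded_linear_matrix_mult_left_comp bounded_linear_matrix_mult_right_comp
        bounded_linear_fst_comp bounded_linear_snd_comp bounded_linear_ident)
  moreover have "L y = chart (inv_into UZs eta y)" if "y \<in> GW U Uperp \<times> GW V Vperp \<times> GL" for y
  proof -
    have "y \<in> eta ` UZs"
      using that by (simp add: eta_image)
    then obtain a where a: "a \<in> param_dom" "y = eta (chart_inv a)"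
      by (metis imageE UZ_cases)
    then have "inv_into UZs eta y = chart_inv a"
      by (intro inv_into_f_eq[OF inj_on_eta]) (simp_all add: UZ_def)
    with a show ?thesis
      by (auto simp: L_def eta_chart_inv chart_chart_inv U.pinv_Wperp_generator V.pinv_Wperp_generator
          matrix_add_ldistrib matrix_add_rdistrib U.pinv_Wperp_W V.pinv_Wperp_W)
  qed
  ultimately show ?thesis
    unfolding analytic_on_subset_def by (metis IntD2 open_UNIV UNIV_I)
qed

end

text \<open>Only the rank and orthogonality hypotheses are used: \<open>U_Z\<close>, \<open>\<star>_Z\<close> and \<open>\<eta>_Z\<close>
  depend on the frames \<open>U, U\<^sub>\<bottom>, V, V\<^sub>\<bottom>\<close> alone, not on \<open>G\<close>, \<open>Z\<close> or the bounds on \<open>r\<close>.\<close>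

theorem mainTheorem17:
  fixes U :: "real^'r^'n" and Uperp :: "real^'p^'n"
    and V :: "real^'r^'m" and Vperp :: "real^'q^'m"
    and G :: "real^'r^'r" and Z :: "real^'m^'n"
  assumes "0 < CARD('r)" and "CARD('r) < min CARD('n) CARD('m)"
    and "CARD('p) = CARD('n) - CARD('r)" and "CARD('q) = CARD('m) - CARD('r)"
    and "rank U = CARD('r)" and "rank V = CARD('r)"
    and "rank Uperp = CARD('n) - CARD('r)" and "rank Vperp = CARD('m) - CARD('r)"
    and "transpose U ** Uperp = 0" and "transpose V ** Vperp = 0"
    and "invertible G" and "Z = U ** G ** transpose V"
  shows "lie_group_chart (UZ U Uperp V Vperp) (starZ U Uperp V Vperp) (U ** transpose V)
            (thetaZ U Uperp V Vperp) param_dom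
       \<and> etaZ U Uperp V Vperp \<in>
            iso \<lparr>carrier = UZ U Uperp V Vperp, mult = starZ U Uperp V Vperp, one = U ** transpose V\<rparr>
                (mat_grp (GW U Uperp) \<times>\<times> mat_grp (GW V Vperp) \<times>\<times> mat_grp GL)
       \<and> real_analytic_on param_dom (\<lambda>a. etaZ U Uperp V Vperp (thetainv U Uperp V Vperp a))
       \<and> analytic_on_subset (GW U Uperp \<times> GW V Vperp \<times> GL)
            (\<lambda>y. thetaZ U Uperp V Vperp (inv_into (UZ U Uperp V Vperp) (etaZ U Uperp V Vperp) y))"
proof -
  interpret chart_frames U Uperp V Vperp
    by unfold_locales (use assms(3-10) in simp_all)
  show ?thesis
    using lie_group_chart_UZ eta_iso real_analytic_on_eta_chart_inv analytic_on_subset_chart_inv_eta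
    by (simp add: UZ_group_def)
qed

end
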